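(* Let $d,q\geq 2$ be integers with $d\mid q$. Then for every $x\in\mathbb{Z}$, the natural density of $\{n\in\mathbb{N}: u_q(n)+x\equiv 0\pmod d\}$ exists and equals $$\frac{1}{d^2}\sum_{f\mid\gcd(x,d)}f\cdot\varphi\!\left(\frac{d}{f}\right),$$ where the sum runs over positive divisors $f$ of $\gcd(x,d)$ and $\varphi$ is Euler's totient function.
   Context: For an integer $q\geq 2$ and $n\in\mathbb{N}$: $v_q(0)=0$ and, for $n>0$, $v_q(n)=\max\{k: q^k\mid n\}$; $w_q(n)=\sum_{i=0}^n v_q(i)$; $u_q(n)=\sum_{i=0}^n w_q(i)$. The natural density of $T\subseteq\mathbb{N}$ is $\lim_{N\to\infty}|\{n\in T: 0\leq n<N\}|/N$. *)

theory Defs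
  imports "HOL-Analysis.Analysis" "HOL-Number_Theory.Number_Theory"
begin

definition vq :: "nat \<Rightarrow> nat \<Rightarrow> nat" where
  "vq q n = (if n = 0 then 0 else (GREATEST k. q ^ k dvd n))"

definition wq :: "nat \<Rightarrow> nat \<Rightarrow> nat" where
  "wq q n = (\<Sum>i\<le>n. vq q i)"

definition uq :: "nat \<Rightarrow> nat \<Rightarrow> nat" where
  "uq q n = (\<Sum>i\<le>n. wq q i)"

definition has_natural_density :: "nat set \<Rightarrow> real \<Rightarrow> bool" where
  "has_natural_density T \<delta> \<longleftrightarrow>
     ((\<lambda>N. real (card {n \<in> T. n < N}) / real N) \<longlongrightarrow> \<delta>) sequentially"

end

(*
  Write n = q^2 j + q s + r with r, s < q. Since w_q(q m + r) = m + w_q(m) for r < q,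
  one gets u_q(q m + r) = q (sum of w_q(q i) over i < m) + (r + 1) w_q(q m), so modulo
  d (a divisor of q) u_q(n) is congruent to (r + 1)(s + c_j), where c_j depends only on j.
  As r and s run over [0, q), the pair (r + 1, s + c_j) hits every residue pair modulo d
  exactly (q/d)^2 times. Hence every block of q^2 consecutive integers contains (q/d)^2 N
  solutions, where N counts the pairs (a, b) modulo d with a b + x = 0 (mod d), and the
  density is N / d^2. For fixed a the congruence in b has gcd(a, d) solutions if gcd(a, d)
  divides x and none otherwise; since exactly phi(d/f) of the a in [1, d] have
  gcd(a, d) = f, this gives N = sum of f phi(d/f) over the divisors f of gcd(x, d).
*)

theory Submission
  imports Defs
begin

lemma sum_lessThan_add:
  fixes f :: "nat \<Rightarrow> 'a::comm_monoid_add"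
  shows "(\<Sum>n<a + b. f n) = (\<Sum>n<a. f n) + (\<Sum>i<b. f (a + i))"
  by (induction b) (simp_all add: add.assoc)

lemma sum_lessThan_mult_blocks:
  fixes h :: "nat \<Rightarrow> 'a::comm_monoid_add"
  shows "(\<Sum>n<k * m. h n) = (\<Sum>i<m. \<Sum>r<k. h (k * i + r))"
proof -
  have "(\<Sum>r<k. h (k * i + r)) = (\<Sum>n\<in>{i * k..<i * k + k}. h n)" for i
    using sum.shift_bounds_nat_ivl[of h 0 "i * k" k] by (simp add: atLeast0LessThan ac_simps)
  then show ?thesis using sum.nat_group[of h k m] by (simp add: mult.commute)
qed

lemma card_Collect_less_eq_sum_of_bool:
  fixes N :: nat
  shows "card {n. P n \<and> n < N} = (\<Sum>n<N. of_bool (P n))"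
proof -
  have "{..<N} \<inter> {n. P n} = {n. P n \<and> n < N}" by auto
  then show ?thesis by simp
qed

lemma periodic_add_mult:
  fixes k :: nat
  assumes "\<And>n. h (n + d) = h n"
  shows "h (n + d * k) = h n"
proof (induction k)
  case (Suc k)
  have "n + d * Suc k = (n + d * k) + d" by simp
  then show ?case using Suc assms by metis
qed simp

lemma sum_periodic_shift:
  fixes h :: "nat \<Rightarrow> 'a::cancel_comm_monoid_add"
  assumes "\<And>n. h (n + d) = h n"
  shows "(\<Sum>s<d. h (s + t)) = (\<Sum>s<d. h s)"
proof (induction t)
  case (Suc t)
  have "h t + (\<Sum>s<d. h (s + Suc t)) = (\<Sum>s<Suc d. h (s + t))"
    unfolding sum.lessThan_Suc_shift by simp
  also have "\<dots> = h t + (\<Sum>s<d. h (s + t))"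
    using assms[of t] by (simp add: add.commute)
  finally show ?case using Suc by simp
qed simp

lemma sum_periodic_mult:
  fixes h :: "nat \<Rightarrow> 'a::comm_semiring_1_cancel"
  assumes "\<And>n. h (n + d) = h n"
  shows "(\<Sum>s<d * k. h (s + t)) = of_nat k * (\<Sum>s<d. h s)"
proof -
  have "h (d * i + r + t) = h (r + t)" for i r
    using periodic_add_mult[of h d "r + t" i, OF assms] by (simp add: ac_simps)
  then have "(\<Sum>s<d * k. h (s + t)) = of_nat k * (\<Sum>s<d. h (s + t))"
    by (simp add: sum_lessThan_mult_blocks)
  then show ?thesis using sum_periodic_shift[of h d, OF assms] by simp
qed

lemma sum_periodic_product:
  fixes g :: "nat \<Rightarrow> 'a::comm_semiring_1_cancel"
  assumes per: "\<And>n. g (n + d) = g n"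
  shows "(\<Sum>s<d * k. \<Sum>r<d * k. g (Suc r * (s + t))) =
         of_nat (k * k) * (\<Sum>a\<in>{0<..d}. \<Sum>b<d. g (a * b))"
proof -
  define F where "F a = (\<Sum>b<d. g (a * b))" for a
  have inner: "(\<Sum>s<d * k. g (Suc r * (s + t))) = of_nat k * F (Suc r)" for r
  proof -
    have "g (Suc r * (n + d)) = g (Suc r * n)" for n
      using periodic_add_mult[of g d "Suc r * n" "Suc r", OF per] by (simp add: algebra_simps)
    then show ?thesis
      using sum_periodic_mult[where h="\<lambda>s. g (Suc r * s)" and d=d and k=k and t=t]
      unfolding F_def by simp
  qed
  have "F (Suc (n + d)) = F (Suc n)" for n
  proof -
    have "g (Suc (n + d) * b) = g (Suc n * b)" for b
      using periodic_add_mult[of g d "Suc n * b" b, OF per] by (simp add: algebra_simps)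
    then show ?thesis unfolding F_def by simp
  qed
  then have outer: "(\<Sum>r<d * k. F (Suc r)) = of_nat k * (\<Sum>r<d. F (Suc r))"
    using sum_periodic_mult[where h="\<lambda>r. F (Suc r)" and d=d and k=k and t=0] by simp
  have "(\<Sum>r<d. F (Suc r)) = (\<Sum>a\<in>{0<..d}. F a)"
  proof -
    have "{0<..d} = Suc ` {..<d}" using image_Suc_lessThan[of d] by auto
    then show ?thesis by (simp add: sum.reindex)
  qed
  then show ?thesis
    using inner outer unfolding F_def
    by (simp add: sum.swap[of _ "{..<d * k}"] sum_distrib_left[symmetric] mult.assoc)
qed

lemma card_residue_class_lessThan:
  fixes c :: int
  assumes "d > 0"
  shows "card {b. [int b = c] (mod int d) \<and> b < d * k} = k"
proof -
  define h where "h b = (of_bool ([int b = c] (mod int d)) :: nat)" for b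
  have "[int b = c] (mod int d) \<and> b < d \<longleftrightarrow> b = nat (c mod int d)" for b
  proof
    assume "[int b = c] (mod int d) \<and> b < d"
    then have "int b = c mod int d" by (auto simp: cong_def zmod_int[symmetric])
    then show "b = nat (c mod int d)" by simp
  next
    assume "b = nat (c mod int d)"
    then have "int b = c mod int d" using assms by simp
    moreover have "c mod int d < int d" using assms by simp
    ultimately show "[int b = c] (mod int d) \<and> b < d"
      by (auto simp: cong_def)
  qed
  then have "{b. [int b = c] (mod int d) \<and> b < d} = {nat (c mod int d)}" by blast
  then have "(\<Sum>b<d. h b) = 1"
    unfolding h_def card_Collect_less_eq_sum_of_bool[symmetric] by simp
  moreover have "h (b + d) = h b" for b by (simp add: h_def cong_def)
  moreover have "card {b. [int b = c] (mod int d) \<and> b < d * k} = (\<Sum>b<d * k. h b)"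
    unfolding h_def by (rule card_Collect_less_eq_sum_of_bool)
  ultimately show ?thesis
    using sum_periodic_mult[where h=h and d=d and k=k and t=0] by simp
qed

lemma coprime_linear_congruence_class:
  fixes a d x :: int
  assumes "coprime a d"
  obtains c where "\<And>b. [a * b + x = 0] (mod d) \<longleftrightarrow> [b = c] (mod d)"
proof -
  obtain u where "[a * u = 1] (mod d)" using cong_solve_coprime_int assms by auto
  then have u: "d dvd a * u - 1" by (simp add: cong_iff_dvd_diff)
  have "d dvd a * b + x \<longleftrightarrow> d dvd b - (- x * u)" for b
  proof
    assume "d dvd a * b + x"
    moreover have "b - (- x * u) = u * (a * b + x) - b * (a * u - 1)" by (simp add: algebra_simps)
    ultimately show "d dvd b - (- x * u)" using u by (simp add: dvd_diff)
  next
    assume "d dvd b - (- x * u)"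
    moreover have "a * b + x = a * (b - (- x * u)) - x * (a * u - 1)" by (simp add: algebra_simps)
    ultimately show "d dvd a * b + x" using u by (simp add: dvd_diff)
  qed
  then show ?thesis
    by (intro that[of "- x * u"]) (simp only: cong_0_iff cong_iff_dvd_diff diff_0_right)
qed

lemma gcd_dvd_if_linear_congruence:
  assumes "[int (a * b) + x = 0] (mod int d)"
  shows "int (gcd a d) dvd x"
proof -
  have "int (gcd a d) dvd int (a * b) + x"
    using assms unfolding cong_0_iff by (rule dvd_trans[rotated]) simp
  moreover have "int (gcd a d) dvd int (a * b)" by simp
  ultimately show ?thesis by (simp add: dvd_add_right_iff)
qed

lemma card_linear_congruence_solutions:
  fixes x :: int
  assumes "d > 0"
  shows "card {b. [int (a * b) + x = 0] (mod int d) \<and> b < d} =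
         (if int (gcd a d) dvd x then gcd a d else 0)"
proof (cases "int (gcd a d) dvd x")
  case False
  then show ?thesis using gcd_dvd_if_linear_congruence by auto
next
  case True
  define g where "g = gcd a d"
  have "g > 0" using assms by (simp add: g_def)
  obtain a' where a': "a = g * a'" unfolding g_def by (meson gcd_dvd1 dvdE)
  obtain d' where d': "d = g * d'" unfolding g_def by (meson gcd_dvd2 dvdE)
  obtain x' where x': "x = int g * x'" using True unfolding g_def by (meson dvdE)
  have "d' > 0" using d' assms by simp
  have "coprime (a div g) (d div g)"
    using div_gcd_coprime[of a d] assms unfolding g_def by simp
  then have "coprime a' d'" using a' d' \<open>g > 0\<close> by simp
  then obtain c
    where c: "\<And>b. [int a' * b + x' = 0] (mod int d') \<longleftrightarrow> [b = c] (mod int d')"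
    by (metis coprime_linear_congruence_class coprime_int_iff)
  have "[int (a * b) + x = 0] (mod int d) \<longleftrightarrow> [int b = c] (mod int d')" for b
  proof -
    have "[int (a * b) + x = 0] (mod int d) \<longleftrightarrow>
          int g * int d' dvd int g * (int a' * int b + x')"
      unfolding a' d' x' by (simp add: cong_0_iff algebra_simps)
    also have "\<dots> \<longleftrightarrow> [int a' * int b + x' = 0] (mod int d')"
      using \<open>g > 0\<close> by (simp add: cong_0_iff)
    finally show ?thesis using c by simp
  qed
  then have "{b. [int (a * b) + x = 0] (mod int d) \<and> b < d} =
             {b. [int b = c] (mod int d') \<and> b < d' * g}"
    using d' by (simp add: mult.commute)
  then show ?thesis
    using card_residue_class_lessThan[OF \<open>d' > 0\<close>] True by (simp add: g_def)
qed

lemma sum_card_linear_congruence_solutions: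
  fixes x :: int
  assumes "d > 0"
  shows "(\<Sum>a\<in>{0<..d}. card {b. [int (a * b) + x = 0] (mod int d) \<and> b < d}) =
         (\<Sum>f | f dvd nat (gcd x (int d)). f * totient (d div f))"
proof -
  define h where "h f = (if int f dvd x then f else 0)" for f
  have "(\<Sum>a\<in>{0<..d}. card {b. [int (a * b) + x = 0] (mod int d) \<and> b < d}) =
        (\<Sum>a\<in>{0<..d}. h (gcd a d))"
    using card_linear_congruence_solutions[OF assms] by (simp add: h_def)
  also have "\<dots> = (\<Sum>f | f dvd d. \<Sum>a | a \<in> {0<..d} \<and> gcd a d = f. h (gcd a d))"
    using assms by (intro sum.group[symmetric]) auto
  also have "\<dots> = (\<Sum>f | f dvd d. h f * totient (d div f))"
  proof (rule sum.cong[OF refl])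
    fix f assume "f \<in> {f. f dvd d}"
    then have "card {a. a \<in> {0<..d} \<and> gcd a d = f} = totient (d div f)"
      using card_gcd_eq_totient[OF assms] by simp
    then show "(\<Sum>a | a \<in> {0<..d} \<and> gcd a d = f. h (gcd a d)) = h f * totient (d div f)"
      by simp
  qed
  also have "\<dots> = (\<Sum>f | f dvd d. if int f dvd x then f * totient (d div f) else 0)"
    by (intro sum.cong) (auto simp: h_def)
  also have "\<dots> = (\<Sum>f | f dvd d \<and> int f dvd x. f * totient (d div f))"
    using sum.inter_filter[of "{f. f dvd d}" "\<lambda>f. f * totient (d div f)" "\<lambda>f. int f dvd x"] assms
    by simp
  also have "{f. f dvd d \<and> int f dvd x} = {f. f dvd nat (gcd x (int d))}"
  proof -
    have "f dvd nat (gcd x (int d)) \<longleftrightarrow> int f dvd gcd x (int d)" for f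
      by (metis gcd_ge_0_int nat_0_le of_nat_dvd_iff)
    then show ?thesis by auto
  qed
  finally show ?thesis .
qed

lemma card_less_block_counts_approx:
  assumes "M > 0" and blocks: "\<And>J. card {n \<in> T. n < M * J} = J * K"
  shows "\<bar>real (card {n \<in> T. n < N}) - real N * real K / real M\<bar> \<le> real K"
proof -
  define C where "C N = card {n \<in> T. n < N}" for N
  have mono: "C A \<le> C B" if "A \<le> B" for A B
    unfolding C_def using that by (intro card_mono) auto
  define J where "J = N div M"
  define r where "r = N mod M"
  have N: "N = M * J + r" and "r < M"
    using \<open>M > 0\<close> by (simp_all add: J_def r_def)
  have "J * K \<le> C N" using mono[of "M * J" N] blocks[of J] N unfolding C_def by simp
  then have "real J * real K \<le> real (C N)" by (simp flip: of_nat_mult)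
  moreover have "C N \<le> J * K + K"
    using mono[of N "M * (J + 1)"] blocks[of "J + 1"] N \<open>r < M\<close> unfolding C_def by simp
  then have "real (C N) \<le> real J * real K + real K" by (simp flip: of_nat_mult of_nat_add)
  moreover have "real N * real K / real M = real J * real K + real r * real K / real M"
    using \<open>M > 0\<close> unfolding N by (simp add: field_simps)
  moreover have "real r * real K / real M \<le> real K"
    using \<open>r < M\<close> by (simp add: field_simps mult_left_mono)
  moreover have "0 \<le> real r * real K / real M" by simp
  ultimately show ?thesis unfolding C_def abs_le_iff by linarith
qed

lemma has_natural_density_if_block_counts:
  assumes "M > 0" and "\<And>J. card {n \<in> T. n < M * J} = J * K"
  shows "has_natural_density T (real K / real M)"
proof -
  define C where "C N = card {n \<in> T. n < N}" for N
  have "((\<lambda>N. real (C N) / real N - real K / real M) \<longlongrightarrow> 0) sequentially"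
  proof (rule Lim_null_comparison)
    show "\<forall>\<^sub>F N in sequentially.
            norm (real (C N) / real N - real K / real M) \<le> real K / real N"
    proof (rule eventually_mono[OF eventually_gt_at_top[of 0]])
      fix N :: nat assume "N > 0"
      then have "real (C N) / real N - real K / real M =
                 (real (C N) - real N * real K / real M) / real N"
        by (simp add: field_simps)
      then show "norm (real (C N) / real N - real K / real M) \<le> real K / real N"
        using card_less_block_counts_approx[OF assms, of N] \<open>N > 0\<close>
        unfolding C_def by (simp add: divide_right_mono)
    qed
  qed (rule lim_const_over_n)
  then show ?thesis
    unfolding has_natural_density_def C_def by (rule Lim_transform[OF tendsto_const])
qed

lemma vq_eq_multiplicity:
  assumes "q \<ge> 2" "n > 0"
  shows "vq q n = multiplicity q n"
proof -
  have "\<not> is_unit q" using assms by simp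
  then show ?thesis unfolding vq_def using assms
    by (auto intro!: Greatest_equality multiplicity_dvd multiplicity_geI)
qed

lemma vq_eq_0_if_not_dvd:
  assumes "q \<ge> 2" "\<not> q dvd n"
  shows "vq q n = 0"
  using assms vq_eq_multiplicity not_dvd_imp_multiplicity_0 by (cases "n = 0") (auto simp: vq_def)

lemma vq_mult_self:
  assumes "q \<ge> 2" "n > 0"
  shows "vq q (q * n) = Suc (vq q n)"
proof -
  have "\<not> is_unit q" using assms by simp
  then show ?thesis using assms vq_eq_multiplicity multiplicity_times_same[of n q] by simp
qed

lemma wq_Suc: "wq q (Suc n) = wq q n + vq q (Suc n)"
  by (simp add: wq_def)

lemma wq_mult_add_less:
  assumes "q \<ge> 2" "r < q"
  shows "wq q (q * m + r) = wq q (q * m)"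
  using assms(2)
proof (induction r)
  case (Suc r)
  then have "\<not> q dvd Suc (q * m + r)"
    by (metis add_Suc_right dvd_add_right_iff dvd_triv_left nat_dvd_not_less zero_less_Suc)
  with Suc show ?case by (simp add: wq_Suc vq_eq_0_if_not_dvd[OF assms(1)])
qed simp

lemma wq_mult:
  assumes "q \<ge> 2"
  shows "wq q (q * m) = m + wq q m"
proof (induction m)
  case (Suc m)
  have "q * Suc m = Suc (q * m + (q - 1))" using assms by simp
  then have "wq q (q * Suc m) = wq q (q * m + (q - 1)) + vq q (q * Suc m)"
    by (simp only: wq_Suc)
  also have "\<dots> = m + wq q m + Suc (vq q (Suc m))"
    using wq_mult_add_less[OF assms, of "q - 1" m] assms Suc vq_mult_self[OF assms, of "Suc m"]
    by simp
  finally show ?case by (simp add: wq_Suc)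
qed simp

lemma wq_mult_add:
  assumes "q \<ge> 2" "r < q"
  shows "wq q (q * m + r) = m + wq q m"
  using wq_mult_add_less[OF assms] wq_mult[OF assms(1)] by simp

lemma uq_mult_add:
  assumes "q \<ge> 2" "r < q"
  shows "uq q (q * m + r) = q * (\<Sum>j<m. j + wq q j) + Suc r * (m + wq q m)"
proof -
  have "uq q (q * m + r) = (\<Sum>n<q * m. wq q n) + (\<Sum>i<Suc r. wq q (q * m + i))"
    unfolding uq_def lessThan_Suc_atMost[symmetric] add_Suc_right[symmetric] sum_lessThan_add ..
  also have "(\<Sum>n<q * m. wq q n) = (\<Sum>j<m. q * (j + wq q j))"
    unfolding sum_lessThan_mult_blocks using wq_mult_add[OF assms(1)] by simp
  also have "(\<Sum>i<Suc r. wq q (q * m + i)) = Suc r * (m + wq q m)"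
    using wq_mult_add[OF assms(1)] assms(2) by simp
  finally show ?thesis by (simp add: sum_distrib_left)
qed

lemma uq_mult_add_cong:
  assumes "q \<ge> 2" "d dvd q" "r < q"
  shows "[uq q (q * m + r) = Suc r * (m + wq q m)] (mod d)"
proof -
  have "[q * (\<Sum>j<m. j + wq q j) = 0] (mod d)"
    using assms(2) by (simp add: cong_0_iff)
  then show ?thesis
    unfolding uq_mult_add[OF assms(1,3)] using cong_add_rcancel_0_nat by blast
qed

lemma uq_block_cong:
  assumes "q \<ge> 2" "d dvd q" "r < q" "s < q"
  shows "[uq q (q * (q * j + s) + r) = Suc r * (s + (j + wq q j))] (mod d)"
proof -
  have "[q * j + s + wq q (q * j + s) = s + (j + wq q j)] (mod d)"
    using assms(2) wq_mult_add[OF assms(1,4)]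
    by (simp add: cong_0_iff cong_add_rcancel_0_nat add.assoc)
  then have "[Suc r * (q * j + s + wq q (q * j + s)) = Suc r * (s + (j + wq q j))] (mod d)"
    by (rule cong_scalar_left)
  with uq_mult_add_cong[OF assms(1-3)] show ?thesis
    using cong_trans by blast
qed

lemma card_uq_solutions_blocks:
  fixes x :: int
  assumes "q \<ge> 2" "d > 0" "d dvd q"
  shows "card {n. [int (uq q n) + x = 0] (mod int d) \<and> n < q * q * J} =
         J * ((q div d) ^ 2 *
              (\<Sum>a\<in>{0<..d}. card {b. [int (a * b) + x = 0] (mod int d) \<and> b < d}))"
proof -
  define g where "g y = (of_bool ([int y + x = 0] (mod int d)) :: nat)" for y
  define S where "S = (\<Sum>a\<in>{0<..d}. \<Sum>b<d. g (a * b))"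
  obtain k where q: "q = d * k" using assms(3) by blast
  have g_cong: "g y = g y'" if "[y = y'] (mod d)" for y y'
  proof -
    have "[int y + x = int y' + x] (mod int d)"
      using that by (intro cong_add) (auto simp: cong_int_iff)
    then have "[int y + x = 0] (mod int d) \<longleftrightarrow> [int y' + x = 0] (mod int d)"
      using cong_sym cong_trans by blast
    then show ?thesis unfolding g_def by simp
  qed
  have g_periodic: "g (y + d) = g y" for y
    by (rule g_cong) (simp add: cong_def)
  have block: "(\<Sum>i<q * q. g (uq q (q * q * j + i))) = k * k * S" for j
  proof -
    have "(\<Sum>i<q * q. g (uq q (q * q * j + i))) =
          (\<Sum>s<q. \<Sum>r<q. g (uq q (q * (q * j + s) + r)))"
      by (simp add: sum_lessThan_mult_blocks algebra_simps)
    also have "\<dots> = (\<Sum>s<q. \<Sum>r<q. g (Suc r * (s + (j + wq q j))))"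
      using g_cong[OF uq_block_cong[OF assms(1,3)]] by simp
    also have "\<dots> = k * k * S"
      using sum_periodic_product[where g=g and d=d and k=k and t="j + wq q j", OF g_periodic] q
      unfolding S_def by simp
    finally show ?thesis .
  qed
  have "card {n. [int (uq q n) + x = 0] (mod int d) \<and> n < q * q * J} =
        (\<Sum>n<q * q * J. g (uq q n))"
    unfolding card_Collect_less_eq_sum_of_bool g_def ..
  also have "\<dots> = J * (k * k * S)"
    by (simp add: sum_lessThan_mult_blocks[of _ "q * q"] block)
  also have "S = (\<Sum>a\<in>{0<..d}. card {b. [int (a * b) + x = 0] (mod int d) \<and> b < d})"
    unfolding S_def g_def card_Collect_less_eq_sum_of_bool by simp
  finally show ?thesis using q assms(2) by (simp add: power2_eq_square)
qed

theorem theorem4p2: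
  fixes d q :: nat and x :: int
  assumes "d \<ge> 2" and "q \<ge> 2" and "d dvd q"
  shows "has_natural_density {n. [int (uq q n) + x = 0] (mod int d)}
           ((1 / real d ^ 2) *
            (\<Sum>f | f dvd nat (gcd x (int d)). real f * real (totient (d div f))))"
proof -
  define S where "S = (\<Sum>a\<in>{0<..d}. card {b. [int (a * b) + x = 0] (mod int d) \<and> b < d})"
  have "d > 0" "q * q > 0" using assms by simp_all
  then have "has_natural_density {n. [int (uq q n) + x = 0] (mod int d)}
               (real ((q div d) ^ 2 * S) / real (q * q))"
    using card_uq_solutions_blocks[OF assms(2) \<open>d > 0\<close> assms(3)]
    by (intro has_natural_density_if_block_counts) (simp_all add: S_def)
  moreover have "real ((q div d) ^ 2 * S) / real (q * q) = real S / real d ^ 2"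
    using assms(3) \<open>q * q > 0\<close> by (auto simp: power2_eq_square elim!: dvdE)
  moreover have "real S = (\<Sum>f | f dvd nat (gcd x (int d)). real f * real (totient (d div f)))"
    unfolding S_def sum_card_linear_congruence_solutions[OF \<open>d > 0\<close>] by simp
  ultimately show ?thesis by simp
qed

end
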